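(* Let $F$ be a finite field with $q=|F|$. Let $m,n\in\mathbb{N}$ with $m\le n+1$, and let $x\in F^{m+n+1}$. Then $$(q-1)\cdot[\operatorname{rank}(H_{m,n}(x))\le m] = \sum_{\substack{v\in F^{1\times(m+1)}\\ v\ne0}}[v\,H_{m,n}(x)=0] \;-\; q\sum_{\substack{v\in F^{1\times m}\\ v\ne 0}}[v\,H_{m-1,n+1}(x)=0].$$
   Context: $\mathbb{N}=\{0,1,2,\ldots\}$. For a statement $\mathcal{A}$, $[\mathcal{A}]$ is $1$ if $\mathcal{A}$ is true and $0$ otherwise. For $x=(x_0,\ldots,x_N)\in F^{N+1}$ and integers $p,p'\ge -1$ with $p+p'\le N$, $H_{p,p'}(x)=(x_{i+j})_{0\le i\le p,\,0\le j\le p'}$ (a $(p+1)\times(p'+1)$ matrix). Row vectors $v$ multiply matrices from the left. *)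

theory Defs
  imports "Jordan_Normal_Form.DL_Rank"
begin

text \<open>The paper's H_{p,p'}(x) is hankel_mat (p+1) (p'+1) x,
  which also covers p = -1 or p' = -1 (zero rows / zero columns).\<close>
definition hankel_mat :: "nat \<Rightarrow> nat \<Rightarrow> 'a vec \<Rightarrow> 'a mat" where
  "hankel_mat r c x = mat r c (\<lambda>(i,j). x $ (i + j))"

end

theory Submission
  imports Defs "Berlekamp_Zassenhaus.Berlekamp_Type_Based"
begin

text \<open>
  Let \<open>K\<close>, \<open>L\<close> and \<open>K'\<close> be the left kernels of \<open>H\<^sub>m\<^sub>,\<^sub>n(x)\<close>, \<open>H\<^sub>m\<^sub>-\<^sub>1\<^sub>,\<^sub>n(x)\<close> and
  \<open>H\<^sub>m\<^sub>-\<^sub>1\<^sub>,\<^sub>n\<^sub>+\<^sub>1(x)\<close>. Then \<open>K' \<subseteq> L\<close>, \<open>K'\<close> is cut out of \<open>L\<close> by one more linear condition, and \<open>L\<close>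
  is \<open>K \<inter> {v\<^sub>m = 0}\<close> with the last coordinate dropped. The sums on the right count \<open>K\<close> and \<open>K'\<close>
  without their zero vectors, and \<open>rank H\<^sub>m\<^sub>,\<^sub>n(x) \<le> m\<close> iff \<open>K \<noteq> 0\<close>; so it suffices to show that
  \<open>K = 0\<close> forces \<open>K' = 0\<close> and that otherwise \<open>|K| = q |K'|\<close>.
  If some \<open>u \<in> K\<close> has \<open>u\<^sub>m \<noteq> 0\<close>, the functional \<open>v \<mapsto> v\<^sub>m\<close> splits \<open>K\<close> as \<open>L \<times> F\<close>, and the Hankel
  symmetry \<open>\<Sum>\<^sub>l w\<^sub>l (uH)\<^sub>k\<^sub>+\<^sub>l = \<Sum>\<^sub>i u\<^sub>i (wH)\<^sub>i\<^sub>+\<^sub>k\<close> (using \<open>m \<le> n + 1\<close>) shows that the extra condition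
  is automatic on \<open>L\<close>, i.e. \<open>L = K'\<close>. Otherwise \<open>K \<cong> L\<close>, and the extra condition is a nonzero
  functional on \<open>L\<close>: if it vanished, \<open>K\<close> would be closed under the shift
  \<open>v \<mapsto> (0, v\<^sub>0, \<dots>, v\<^sub>m\<^sub>-\<^sub>1)\<close> while all its vectors have \<open>v\<^sub>m = 0\<close>, forcing \<open>K = 0\<close>.
\<close>

lemma card_split_by_functional:
  fixes V :: "'a::{finite,field} vec set" and \<phi> :: "'a vec \<Rightarrow> 'a"
  assumes V: "V \<subseteq> carrier_vec k"
    and closed: "\<And>v w a. v \<in> V \<Longrightarrow> w \<in> V \<Longrightarrow> v + a \<cdot>\<^sub>v w \<in> V"
    and linear: "\<And>v w a. v \<in> V \<Longrightarrow> w \<in> V \<Longrightarrow> \<phi> (v + a \<cdot>\<^sub>v w) = \<phi> v + a * \<phi> w"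
    and u: "u \<in> V" "\<phi> u \<noteq> 0"
  shows "card V = CARD('a) * card {v \<in> V. \<phi> v = 0}"
proof -
  define f where "f v = (v + (- (\<phi> v / \<phi> u)) \<cdot>\<^sub>v u, \<phi> v / \<phi> u)" for v
  define g where "g = (\<lambda>(w, a). w + a \<cdot>\<^sub>v u)"
  have "bij_betw f V ({v \<in> V. \<phi> v = 0} \<times> (UNIV :: 'a set))"
  proof (rule bij_betw_byWitness[where f' = g])
    have uk: "u \<in> carrier_vec k"
      using u V by blast
    show "\<forall>v\<in>V. g (f v) = v"
    proof
      fix v assume "v \<in> V"
      then have "v \<in> carrier_vec k"
        using V by blast
      then show "g (f v) = v"
        using uk by (intro eq_vecI) (auto simp: f_def g_def algebra_simps)
    qed
    show "\<forall>p\<in>{v \<in> V. \<phi> v = 0} \<times> UNIV. f (g p) = p"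
    proof
      fix p assume p: "p \<in> {v \<in> V. \<phi> v = 0} \<times> (UNIV :: 'a set)"
      then obtain w a where wa: "p = (w, a)" "w \<in> V" "\<phi> w = 0"
        by auto
      then have "w \<in> carrier_vec k"
        using V by blast
      then show "f (g p) = p"
        using uk wa u by (auto intro!: eq_vecI simp: f_def g_def linear)
    qed
    show "f ` V \<subseteq> {v \<in> V. \<phi> v = 0} \<times> UNIV"
      using u by (auto simp: f_def closed linear)
    show "g ` ({v \<in> V. \<phi> v = 0} \<times> UNIV) \<subseteq> V"
      using u by (auto simp: g_def closed)
  qed
  moreover have "finite V"
    using V finite_carrier_vec finite_subset by blast
  ultimately show ?thesis
    by (simp add: bij_betw_same_card card_cartesian_product)
qed

lemma vec_zero_if_shift_closed:
  assumes last: "\<And>u. u \<in> K \<Longrightarrow> u $ m = 0"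
    and shift: "\<And>u. u \<in> K \<Longrightarrow> vCons 0 (vec_first u m) \<in> K"
    and u: "u \<in> K" "u \<in> carrier_vec (Suc m)"
  shows "u = 0\<^sub>v (Suc m)"
proof -
  have "\<forall>u\<in>K. u $ (m - k) = 0" for k
  proof (induction k)
    case 0
    then show ?case
      using last by simp
  next
    case (Suc k)
    show ?case
    proof (cases "k < m")
      case True
      have "u $ (m - Suc k) = vCons 0 (vec_first u m) $ (m - k)" for u :: "'a vec"
        using True by (simp add: vec_index_vCons vec_first_def)
      then show ?thesis
        using Suc.IH shift by simp
    next
      case False
      then show ?thesis
        using Suc.IH by simp
    qed
  qed
  then have "u $ i = 0" if "i < Suc m" for i
    using u(1) that by (metis diff_diff_cancel less_Suc_eq_le)
  then show ?thesis
    using u(2) by (intro eq_vecI) auto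
qed

lemma orthogonal_vec_exists:
  fixes S :: "'a::field vec set"
  assumes S: "finite S" "S \<subseteq> carrier_vec n" "card S < n"
  shows "\<exists>v \<in> carrier_vec n. v \<noteq> 0\<^sub>v n \<and> (\<forall>s\<in>S. s \<bullet> v = 0)"
proof -
  obtain ss where ss: "set ss = S" "distinct ss"
    using finite_distinct_list[OF S(1)] by blast
  have len: "length ss < n"
    using ss S(3) distinct_card by fastforce
  \<comment> \<open>The vectors of \<open>S\<close>, padded by zero rows, form a singular square matrix.\<close>
  define c where "c i = (if i < length ss then ss ! i else 0\<^sub>v n)" for i
  define M where "M = mat\<^sub>r n n (\<lambda>i. if i = n - 1 then 0\<^sub>v n else c i)"
  have "c \<in> {0..<n} \<rightarrow> carrier_vec n"
    using S(2) ss(1) nth_mem by (fastforce simp: c_def)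
  then have "det M = 0"
    unfolding M_def using len by (intro det_row_0) auto
  then obtain v where v: "v \<in> carrier_vec n" "v \<noteq> 0\<^sub>v n" "M *\<^sub>v v = 0\<^sub>v n"
    using det_0_iff_vec_prod_zero_field[of M n] by (auto simp: M_def)
  have "s \<bullet> v = 0" if "s \<in> S" for s
  proof -
    obtain i where i: "i < length ss" "ss ! i = s"
      using \<open>s \<in> S\<close> ss(1) by (metis in_set_conv_nth)
    moreover have "s \<in> carrier_vec n"
      using \<open>s \<in> S\<close> S(2) by blast
    ultimately have "(M *\<^sub>v v) $ i = s \<bullet> v"
      using len by (simp add: M_def c_def)
    then show ?thesis
      using v(3) i(1) len by simp
  qed
  then show ?thesis
    using v by blast
qed

lemma (in vec_space) orthogonal_to_spanning_set:
  assumes S: "S \<subseteq> carrier_vec n" "span S = carrier_vec n"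
    and v: "v \<in> carrier_vec n" "\<forall>s\<in>S. v \<bullet> s = 0"
  shows "v = 0\<^sub>v n"
proof -
  have "v \<in> orthogonal_complement S"
    using v by (simp add: orthogonal_complement_def)
  then have "v \<in> orthogonal_complement (span S)"
    using in_orthogonal_complement_span[OF S(1)] by simp
  then have "v \<bullet> unit_vec n i = 0" for i
    unfolding S(2) orthogonal_complement_def using unit_vec_carrier by blast
  then have "v $ i = 0" if "i < n" for i
    using scalar_prod_right_unit[OF that, of v] by simp
  then show ?thesis
    using v(1) by (intro eq_vecI) auto
qed

lemma (in vec_space) maximal_lin_indpt_span:
  assumes S: "maximal S (\<lambda>T. T \<subseteq> W \<and> lin_indpt T)" and W: "W \<subseteq> carrier_vec n"
  shows "W \<subseteq> span S"
proof
  have Ssub: "S \<subseteq> W" and Sli: "lin_indpt S"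
    using S by (auto simp: maximal_def)
  then have Sc: "S \<subseteq> carrier_vec n"
    using W by blast
  fix c assume c: "c \<in> W"
  show "c \<in> span S"
  proof (rule ccontr)
    assume "c \<notin> span S"
    moreover have "c \<notin> S"
      using calculation in_own_span[OF Sc] by blast
    ultimately have "lin_indpt (insert c S)"
      using lin_dep_iff_in_span[OF Sc Sli _ \<open>c \<notin> S\<close>] c W by auto
    then have "insert c S = S"
      using S c Ssub unfolding maximal_def by blast
    then show False
      using \<open>c \<notin> S\<close> by blast
  qed
qed

lemma (in vec_space) rank_lt_iff_left_kernel:
  assumes A: "A \<in> carrier_mat n nc"
  shows "rank A < n \<longleftrightarrow> (\<exists>v\<in>carrier_vec n. v \<noteq> 0\<^sub>v n \<and> (\<forall>j<nc. v \<bullet> col A j = 0))"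
proof -
  obtain S where S: "maximal S (\<lambda>T. T \<subseteq> set (cols A) \<and> lin_indpt T)"
    using maximal_exists[of "\<lambda>T. T \<subseteq> set (cols A) \<and> lin_indpt T" "card (set (cols A))" "{}"]
    by (meson List.finite_set card_mono empty_iff empty_subsetI finite_lin_indpt2 rev_finite_subset)
  have rank: "rank A = card S"
    by (rule rank_card_indpt[OF A S])
  have Ssub: "S \<subseteq> set (cols A)" and Sli: "lin_indpt S"
    using S by (auto simp: maximal_def)
  have cols: "set (cols A) = col A ` {..<nc}" and colsc: "set (cols A) \<subseteq> carrier_vec n"
    using A by (auto simp: cols_def)
  have Sc: "S \<subseteq> carrier_vec n" and finS: "finite S"
    using Ssub colsc by (auto intro: rev_finite_subset)
  have "set (cols A) \<subseteq> span S"
    by (rule maximal_lin_indpt_span[OF S colsc])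
  then have span_cols: "col A j \<in> span S" if "j < nc" for j
    using that cols by blast
  have orth_S: "(\<forall>j<nc. v \<bullet> col A j = 0) \<longleftrightarrow> (\<forall>s\<in>S. v \<bullet> s = 0)" if v: "v \<in> carrier_vec n" for v
  proof
    assume "\<forall>j<nc. v \<bullet> col A j = 0"
    then show "\<forall>s\<in>S. v \<bullet> s = 0"
      using Ssub cols by auto
  next
    assume "\<forall>s\<in>S. v \<bullet> s = 0"
    then have "v \<in> orthogonal_complement S"
      using v by (simp add: orthogonal_complement_def)
    then have "v \<in> orthogonal_complement (span S)"
      using in_orthogonal_complement_span[OF Sc] by simp
    then show "\<forall>j<nc. v \<bullet> col A j = 0"
      using span_cols by (simp add: orthogonal_complement_def)
  qed
  show ?thesis
  proof
    assume "rank A < n"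
    then obtain v where "v \<in> carrier_vec n" "v \<noteq> 0\<^sub>v n" "\<forall>s\<in>S. s \<bullet> v = 0"
      using orthogonal_vec_exists[OF finS Sc] rank by auto
    then show "\<exists>v\<in>carrier_vec n. v \<noteq> 0\<^sub>v n \<and> (\<forall>j<nc. v \<bullet> col A j = 0)"
      using orth_S Sc comm_scalar_prod by (metis subsetD)
  next
    assume "\<exists>v\<in>carrier_vec n. v \<noteq> 0\<^sub>v n \<and> (\<forall>j<nc. v \<bullet> col A j = 0)"
    then obtain v where v: "v \<in> carrier_vec n" "v \<noteq> 0\<^sub>v n" "\<forall>s\<in>S. v \<bullet> s = 0"
      using orth_S by blast
    show "rank A < n"
    proof (rule ccontr)
      assume "\<not> rank A < n"
      then have "basis S"
        using dim_li_is_basis[OF fin_dim finS _ Sli] Sc rank dim_is_n by simp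
      then have "span S = carrier_vec n"
        unfolding basis_def by simp
      then show False
        using orthogonal_to_spanning_set[OF Sc _ v(1,3)] v(2) by blast
    qed
  qed
qed

definition hankel_comb :: "'a::comm_semiring_0 vec \<Rightarrow> 'a vec \<Rightarrow> nat \<Rightarrow> nat \<Rightarrow> 'a" where
  "hankel_comb x v r j = (\<Sum>i<r. v $ i * x $ (i + j))"

definition hankel_kernel :: "nat \<Rightarrow> nat \<Rightarrow> 'a::comm_semiring_0 vec \<Rightarrow> 'a vec set" where
  "hankel_kernel r c x = {v \<in> carrier_vec r. \<forall>j<c. hankel_comb x v r j = 0}"

lemma scalar_prod_col_hankel_mat:
  assumes "v \<in> carrier_vec r" "j < c"
  shows "v \<bullet> col (hankel_mat r c x) j = hankel_comb x v r j"
  using assms unfolding hankel_mat_def hankel_comb_def scalar_prod_def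
  by (simp add: atLeast0LessThan)

lemma hankel_kernel_mat_of_row:
  "hankel_kernel r c x = {v \<in> carrier_vec r. mat_of_row v * hankel_mat r c x = 0\<^sub>m 1 c}"
proof -
  have "mat_of_row v * hankel_mat r c x = 0\<^sub>m 1 c \<longleftrightarrow> (\<forall>j<c. hankel_comb x v r j = 0)"
    if "v \<in> carrier_vec r" for v
    using that by (auto simp: mat_eq_iff hankel_mat_def scalar_prod_col_hankel_mat[symmetric])
  then show ?thesis
    unfolding hankel_kernel_def by blast
qed

lemma hankel_comb_lincomb:
  "v \<in> carrier_vec r \<Longrightarrow> w \<in> carrier_vec r \<Longrightarrow>
   hankel_comb x (v + a \<cdot>\<^sub>v w) r j = hankel_comb x v r j + a * hankel_comb x w r j"
  unfolding hankel_comb_def by (simp add: sum.distrib distrib_right sum_distrib_left mult.assoc)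

lemma hankel_comb_append_zero:
  "w \<in> carrier_vec m \<Longrightarrow> hankel_comb x (w @\<^sub>v 0\<^sub>v 1) (Suc m) j = hankel_comb x w m j"
  unfolding hankel_comb_def by simp

lemma hankel_comb_vec_first:
  "hankel_comb x u (Suc m) j = hankel_comb x (vec_first u m) m j + u $ m * x $ (m + j)"
  unfolding hankel_comb_def vec_first_def by simp

lemma hankel_comb_vCons_0:
  "hankel_comb x (vCons 0 w) (Suc m) j = hankel_comb x w m (Suc j)"
  unfolding hankel_comb_def by (simp add: sum.lessThan_Suc_shift del: sum.lessThan_Suc)

lemma hankel_comb_convolution:
  "(\<Sum>l<s. w $ l * hankel_comb x u r (k + l)) = (\<Sum>i<r. u $ i * hankel_comb x w s (i + k))"
proof -
  have "(\<Sum>l<s. w $ l * hankel_comb x u r (k + l)) = (\<Sum>l<s. \<Sum>i<r. u $ i * (w $ l * x $ (l + (i + k))))"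
    unfolding hankel_comb_def sum_distrib_left by (intro sum.cong refl) (simp add: ac_simps)
  also have "\<dots> = (\<Sum>i<r. u $ i * hankel_comb x w s (i + k))"
    unfolding hankel_comb_def sum_distrib_left by (rule sum.swap)
  finally show ?thesis .
qed

lemma hankel_kernel_carrier: "v \<in> hankel_kernel r c x \<Longrightarrow> v \<in> carrier_vec r"
  by (simp add: hankel_kernel_def)

lemma finite_hankel_kernel: "finite (hankel_kernel r c (x :: 'a::{finite,comm_semiring_0} vec))"
  using finite_carrier_vec by (rule finite_subset[rotated]) (auto simp: hankel_kernel_def)

lemma zero_in_hankel_kernel: "0\<^sub>v r \<in> hankel_kernel r c x"
  by (simp add: hankel_kernel_def hankel_comb_def)

lemma hankel_kernel_lincomb:
  "v \<in> hankel_kernel r c x \<Longrightarrow> w \<in> hankel_kernel r c x \<Longrightarrow> v + a \<cdot>\<^sub>v w \<in> hankel_kernel r c x"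
  by (simp add: hankel_kernel_def hankel_comb_lincomb)

lemma hankel_kernel_Suc:
  "hankel_kernel r (Suc c) x = {w \<in> hankel_kernel r c x. hankel_comb x w r c = 0}"
  by (auto simp: hankel_kernel_def less_Suc_eq)

lemma append_zero_in_hankel_kernel:
  assumes "w \<in> hankel_kernel m c x"
  shows "w @\<^sub>v 0\<^sub>v 1 \<in> hankel_kernel (Suc m) c x"
proof -
  have "w @\<^sub>v 0\<^sub>v 1 \<in> carrier_vec (Suc m)"
    using assms append_carrier_vec[of w m "0\<^sub>v 1" 1] by (simp add: hankel_kernel_def)
  then show ?thesis
    using assms by (simp add: hankel_kernel_def hankel_comb_append_zero del: One_nat_def)
qed

lemma vec_first_in_hankel_kernel:
  "u \<in> hankel_kernel (Suc m) c x \<Longrightarrow> u $ m = 0 \<Longrightarrow> vec_first u m \<in> hankel_kernel m c x"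
  by (simp add: hankel_kernel_def hankel_comb_vec_first)

lemma card_hankel_kernel_last_zero:
  "card {u \<in> hankel_kernel (Suc m) c x. u $ m = 0} = card (hankel_kernel m c x)"
proof (rule bij_betw_same_card[of "\<lambda>u. vec_first u m"], rule bij_betw_byWitness[where f' = "\<lambda>w. w @\<^sub>v 0\<^sub>v 1"])
  show "\<forall>u\<in>{u \<in> hankel_kernel (Suc m) c x. u $ m = 0}. vec_first u m @\<^sub>v 0\<^sub>v 1 = u"
    by (auto intro!: eq_vecI simp: hankel_kernel_def vec_first_def less_Suc_eq)
  show "\<forall>w\<in>hankel_kernel m c x. vec_first (w @\<^sub>v 0\<^sub>v 1) m = w"
    by (auto intro!: eq_vecI simp: hankel_kernel_def vec_first_def)
  show "(\<lambda>u. vec_first u m) ` {u \<in> hankel_kernel (Suc m) c x. u $ m = 0} \<subseteq> hankel_kernel m c x"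
    using vec_first_in_hankel_kernel by blast
  show "(\<lambda>w. w @\<^sub>v 0\<^sub>v 1) ` hankel_kernel m c x \<subseteq> {u \<in> hankel_kernel (Suc m) c x. u $ m = 0}"
    using append_zero_in_hankel_kernel by (auto simp: hankel_kernel_def)
qed

lemma rank_hankel_mat_le_iff:
  fixes x :: "'a::field vec"
  shows "vec_space.rank (Suc m) (hankel_mat (Suc m) c x) \<le> m
    \<longleftrightarrow> hankel_kernel (Suc m) c x \<noteq> {0\<^sub>v (Suc m)}"
proof -
  have "hankel_mat (Suc m) c x \<in> carrier_mat (Suc m) c"
    by (simp add: hankel_mat_def)
  then have "vec_space.rank (Suc m) (hankel_mat (Suc m) c x) < Suc m
      \<longleftrightarrow> (\<exists>v \<in> hankel_kernel (Suc m) c x. v \<noteq> 0\<^sub>v (Suc m))"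
    by (auto simp: vec_space.rank_lt_iff_left_kernel hankel_kernel_def scalar_prod_col_hankel_mat)
  then show ?thesis
    using zero_in_hankel_kernel by auto
qed

lemma sum_indicator_left_kernel_hankel_mat:
  fixes x :: "'a::{finite,field} vec"
  shows "(\<Sum>v \<in> carrier_vec r - {0\<^sub>v r}. if mat_of_row v * hankel_mat r c x = 0\<^sub>m 1 c then 1 else 0)
    = int (card (hankel_kernel r c x)) - 1"
proof -
  have "finite (carrier_vec r - {0\<^sub>v r} :: 'a vec set)"
    by simp
  then have "(\<Sum>v \<in> carrier_vec r - {0\<^sub>v r}. if mat_of_row v * hankel_mat r c x = 0\<^sub>m 1 c then 1 else 0)
      = int (card {v \<in> carrier_vec r - {0\<^sub>v r}. mat_of_row v * hankel_mat r c x = 0\<^sub>m 1 c})"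
    by (simp add: sum.inter_filter[symmetric])
  also have "{v \<in> carrier_vec r - {0\<^sub>v r}. mat_of_row v * hankel_mat r c x = 0\<^sub>m 1 c}
      = hankel_kernel r c x - {0\<^sub>v r}"
    by (auto simp: hankel_kernel_mat_of_row)
  also have "int (card (hankel_kernel r c x - {0\<^sub>v r})) = int (card (hankel_kernel r c x)) - 1"
  proof -
    have "card (hankel_kernel r c x) > 0"
      using finite_hankel_kernel zero_in_hankel_kernel card_gt_0_iff by blast
    then show ?thesis
      by (simp add: card_Diff_singleton[OF zero_in_hankel_kernel] of_nat_diff)
  qed
  finally show ?thesis .
qed

lemma hankel_kernel_extra_column_redundant:
  fixes x :: "'a::idom vec"
  assumes mn: "m \<le> Suc n" and u: "u \<in> hankel_kernel (Suc m) (Suc n) x" and um: "u $ m \<noteq> 0"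
  shows "hankel_kernel m (Suc (Suc n)) x = hankel_kernel m (Suc n) x"
proof -
  have "hankel_comb x w m (Suc n) = 0" if w: "w \<in> hankel_kernel m (Suc n) x" for w
  proof -
    \<comment> \<open>As \<open>m \<le> n + 1\<close>, the indices \<open>k + l\<close> and \<open>i + k\<close> below stay \<open>\<le> n\<close> except for \<open>i = m\<close>.\<close>
    define k where "k = Suc n - m"
    have "0 = (\<Sum>l<m. w $ l * hankel_comb x u (Suc m) (k + l))"
      using u mn by (auto simp: hankel_kernel_def k_def intro!: sum.neutral[symmetric])
    also have "\<dots> = (\<Sum>i<Suc m. u $ i * hankel_comb x w m (i + k))"
      by (rule hankel_comb_convolution)
    also have "\<dots> = u $ m * hankel_comb x w m (Suc n)"
      using w mn by (simp add: hankel_kernel_def k_def)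
    finally show ?thesis
      using um by simp
  qed
  then show ?thesis
    by (auto simp: hankel_kernel_Suc)
qed

lemma shift_in_hankel_kernel:
  assumes u: "u \<in> hankel_kernel (Suc m) (Suc n) x" "u $ m = 0"
    and redundant: "hankel_kernel m (Suc n) x \<subseteq> hankel_kernel m (Suc (Suc n)) x"
  shows "vCons 0 (vec_first u m) \<in> hankel_kernel (Suc m) (Suc n) x"
proof -
  have "vec_first u m \<in> hankel_kernel m (Suc (Suc n)) x"
    using vec_first_in_hankel_kernel[OF u] redundant by blast
  then show ?thesis
    by (simp add: hankel_kernel_def hankel_comb_vCons_0)
qed

lemma hankel_kernel_new_column_nonzero:
  assumes last: "\<And>u. u \<in> hankel_kernel (Suc m) (Suc n) x \<Longrightarrow> u $ m = 0"
    and nontrivial: "hankel_kernel (Suc m) (Suc n) x \<noteq> {0\<^sub>v (Suc m)}"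
  shows "\<exists>w \<in> hankel_kernel m (Suc n) x. hankel_comb x w m (Suc n) \<noteq> 0"
proof (rule ccontr)
  assume "\<not> (\<exists>w \<in> hankel_kernel m (Suc n) x. hankel_comb x w m (Suc n) \<noteq> 0)"
  then have redundant: "hankel_kernel m (Suc n) x \<subseteq> hankel_kernel m (Suc (Suc n)) x"
    by (auto simp: hankel_kernel_Suc)
  have "u = 0\<^sub>v (Suc m)" if "u \<in> hankel_kernel (Suc m) (Suc n) x" for u
    using last that shift_in_hankel_kernel[OF _ _ redundant]
    by (intro vec_zero_if_shift_closed[where K = "hankel_kernel (Suc m) (Suc n) x"])
      (auto dest: hankel_kernel_carrier)
  then show False
    using nontrivial zero_in_hankel_kernel by blast
qed

lemma card_hankel_kernel_Suc:
  fixes x :: "'a::{finite,field} vec"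
  assumes mn: "m \<le> Suc n" and nontrivial: "hankel_kernel (Suc m) (Suc n) x \<noteq> {0\<^sub>v (Suc m)}"
  shows "card (hankel_kernel (Suc m) (Suc n) x) = CARD('a) * card (hankel_kernel m (Suc (Suc n)) x)"
proof (cases "\<exists>u \<in> hankel_kernel (Suc m) (Suc n) x. u $ m \<noteq> 0")
  case True
  then obtain u where u: "u \<in> hankel_kernel (Suc m) (Suc n) x" "u $ m \<noteq> 0"
    by blast
  have "card (hankel_kernel (Suc m) (Suc n) x)
      = CARD('a) * card {v \<in> hankel_kernel (Suc m) (Suc n) x. v $ m = 0}"
    using u by (intro card_split_by_functional[where k = "Suc m"])
      (auto dest: hankel_kernel_carrier intro: hankel_kernel_lincomb)
  also have "\<dots> = CARD('a) * card (hankel_kernel m (Suc n) x)"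
    by (simp add: card_hankel_kernel_last_zero)
  finally show ?thesis
    using hankel_kernel_extra_column_redundant[OF mn u] by simp
next
  case False
  then have "{v \<in> hankel_kernel (Suc m) (Suc n) x. v $ m = 0} = hankel_kernel (Suc m) (Suc n) x"
    by blast
  then have "card (hankel_kernel (Suc m) (Suc n) x) = card (hankel_kernel m (Suc n) x)"
    using card_hankel_kernel_last_zero[of m "Suc n" x] by simp
  moreover obtain w where w: "w \<in> hankel_kernel m (Suc n) x" "hankel_comb x w m (Suc n) \<noteq> 0"
    using hankel_kernel_new_column_nonzero[OF _ nontrivial] False by blast
  moreover have "card (hankel_kernel m (Suc n) x) = CARD('a) * card (hankel_kernel m (Suc (Suc n)) x)"
    unfolding hankel_kernel_Suc[of m "Suc n"] using w
    by (intro card_split_by_functional[where k = m])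
      (auto intro: hankel_kernel_lincomb simp: hankel_kernel_carrier hankel_comb_lincomb)
  ultimately show ?thesis
    by simp
qed

lemma hankel_kernel_trivial_Suc:
  assumes "hankel_kernel (Suc m) c x = {0\<^sub>v (Suc m)}"
  shows "hankel_kernel m (Suc c) x = {0\<^sub>v m}"
proof -
  have "w = 0\<^sub>v m" if w: "w \<in> hankel_kernel m (Suc c) x" for w
  proof -
    have "w \<in> hankel_kernel m c x"
      using w by (simp add: hankel_kernel_Suc)
    then have "w @\<^sub>v 0\<^sub>v 1 \<in> hankel_kernel (Suc m) c x"
      by (rule append_zero_in_hankel_kernel)
    then have "w @\<^sub>v 0\<^sub>v 1 = 0\<^sub>v (Suc m)"
      using assms by blast
    then have "w $ i = 0" if "i < m" for i
      using that w index_append_vec(1)[of i w "0\<^sub>v 1"] by (auto simp: hankel_kernel_def)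
    then show ?thesis
      using w by (intro eq_vecI) (auto simp: hankel_kernel_def)
  qed
  then show ?thesis
    using zero_in_hankel_kernel by blast
qed

theorem proposition12:
  fixes x :: "'a::{finite,field} vec" and m n :: nat
  assumes "m \<le> n + 1"
    and "x \<in> carrier_vec (m + n + 1)"
  shows "(int (card (UNIV :: 'a set)) - 1) *
           (if vec_space.rank (m + 1) (hankel_mat (m + 1) (n + 1) x) \<le> m then 1 else 0)
         = (\<Sum>v\<in>carrier_vec (m + 1) - {0\<^sub>v (m + 1)}.
              if mat_of_row v * hankel_mat (m + 1) (n + 1) x = 0\<^sub>m 1 (n + 1) then 1 else 0)
           - int (card (UNIV :: 'a set)) *
             (\<Sum>v\<in>carrier_vec m - {0\<^sub>v m}.
              if mat_of_row v * hankel_mat m (n + 2) x = 0\<^sub>m 1 (n + 2) then 1 else 0)"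
proof -
  have mn: "m \<le> Suc n"
    using assms(1) by simp
  have rank: "vec_space.rank (m + 1) (hankel_mat (m + 1) (n + 1) x) \<le> m
      \<longleftrightarrow> hankel_kernel (Suc m) (Suc n) x \<noteq> {0\<^sub>v (Suc m)}"
    using rank_hankel_mat_le_iff[of m "Suc n" x] by simp
  show ?thesis
  proof (cases "hankel_kernel (Suc m) (Suc n) x = {0\<^sub>v (Suc m)}")
    case True
    then show ?thesis
      unfolding sum_indicator_left_kernel_hankel_mat rank
      using hankel_kernel_trivial_Suc[OF True] by simp
  next
    case False
    then show ?thesis
      unfolding sum_indicator_left_kernel_hankel_mat rank
      using card_hankel_kernel_Suc[OF mn False] by (simp add: algebra_simps)
  qed
qed

end
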